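(* Let $d$ be a nonnegative integer and let $H$ be a multigraph of even order with $\phi(H) \le d+1$, and let $r$ be the number of vertices of degree $d+1$ in $H$. Let $S \subsetneq V(H)$ with $|S|$ odd, $|S|\ge 3$, such that $\langle S\rangle$ is $(d+1)$-full in $H$, i.e. $t(\langle S\rangle)=d+1$. Then $\Delta(H_S)\le d+1$, $\Gamma(H_S)\le d+1$, and $H_S$ has at most $r$ vertices of degree $d+1$. Also $\Delta(H_{S^c})\le d+1$ and $\Gamma(H_{S^c})\le d+1$, and if $H_{S^c}$ has more than $r$ vertices of degree $d+1$, then it has exactly $r+1$ vertices, each of degree $d+1$. Here $S^c=V(H)\setminus S$.
   Context: Multigraphs are finite and loopless, multiple edges allowed. For $S \subseteq V(H)$, $\langle S\rangle$ is the induced subgraph. For a multigraph $K$ of odd order $n(K)\ge 3$ with $e(K)$ edges, $t(K) = 2e(K)/(n(K)-1)$. $\Gamma(H) = \max\{t(\langle R\rangle) : R\subseteq V(H), |R| \text{ odd}, |R|\ge 3\}$ (statements about $\Gamma$ of a multigraph with no such $R$ are vacuous); $\phi(H) = \lceil \max\{\Delta(H),\Gamma(H)\}\rceil$. Shrinking: for a nonempty proper subset $S$ of $V(H)$, $H_S$ has vertex set $(V(H)\setminus S)\cup\{s\}$ for a new vertex $s$; its edges are the edges of $H - S$ together with, for each $u \notin S$, exactly as many edges $us$ as there are edges of $H$ joining $u$ to vertices of $S$. *)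

theory Defs
  imports Complex_Main
begin

text \<open>A finite loopless multigraph on vertex set V, given by an edge-multiplicity
  function m (m u v = number of edges joining u and v).\<close>
definition multigraph :: "'a set \<Rightarrow> ('a \<Rightarrow> 'a \<Rightarrow> nat) \<Rightarrow> bool" where
  "multigraph V m \<longleftrightarrow> finite V \<and> (\<forall>u v. m u v = m v u) \<and> (\<forall>u. m u u = 0)
     \<and> (\<forall>u v. 0 < m u v \<longrightarrow> u \<in> V \<and> v \<in> V)"

definition deg :: "'a set \<Rightarrow> ('a \<Rightarrow> 'a \<Rightarrow> nat) \<Rightarrow> 'a \<Rightarrow> nat" where
  "deg V m v = (\<Sum>u\<in>V. m v u)"

definition maxdeg :: "'a set \<Rightarrow> ('a \<Rightarrow> 'a \<Rightarrow> nat) \<Rightarrow> nat" where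
  "maxdeg V m = Max (deg V m ` V)"

definition edges_in :: "('a \<Rightarrow> 'a \<Rightarrow> nat) \<Rightarrow> 'a set \<Rightarrow> nat" where
  "edges_in m R = (\<Sum>u\<in>R. \<Sum>v\<in>R. m u v) div 2"

definition tval :: "('a \<Rightarrow> 'a \<Rightarrow> nat) \<Rightarrow> 'a set \<Rightarrow> real" where
  "tval m R = 2 * real (edges_in m R) / (real (card R) - 1)"

text \<open>Gamma; when there is no odd R with |R| >= 3 we take the value 0, so that
  bounds of the form Gamma <= c with c >= 0 hold vacuously.\<close>
definition Gamma :: "'a set \<Rightarrow> ('a \<Rightarrow> 'a \<Rightarrow> nat) \<Rightarrow> real" where
  "Gamma V m = Max (insert 0 {tval m R | R. R \<subseteq> V \<and> odd (card R) \<and> 3 \<le> card R})"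

definition phi :: "'a set \<Rightarrow> ('a \<Rightarrow> 'a \<Rightarrow> nat) \<Rightarrow> int" where
  "phi V m = \<lceil>max (real (maxdeg V m)) (Gamma V m)\<rceil>"

text \<open>Shrinking S to a new vertex: the new vertex is None, old vertices are Some v.\<close>
definition shrink_V :: "'a set \<Rightarrow> 'a set \<Rightarrow> 'a option set" where
  "shrink_V V S = Some ` (V - S) \<union> {None}"

fun shrink_m :: "'a set \<Rightarrow> ('a \<Rightarrow> 'a \<Rightarrow> nat) \<Rightarrow> 'a set \<Rightarrow> 'a option \<Rightarrow> 'a option \<Rightarrow> nat" where
  "shrink_m V m S (Some u) (Some v) = (if u \<in> V - S \<and> v \<in> V - S then m u v else 0)"
| "shrink_m V m S (Some u) None = (if u \<in> V - S then (\<Sum>w\<in>S. m u w) else 0)"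
| "shrink_m V m S None (Some v) = (if v \<in> V - S then (\<Sum>w\<in>S. m v w) else 0)"
| "shrink_m V m S None None = 0"

definition num_deg :: "'a set \<Rightarrow> ('a \<Rightarrow> 'a \<Rightarrow> nat) \<Rightarrow> nat \<Rightarrow> nat" where
  "num_deg V m k = card {v \<in> V. deg V m v = k}"

end

theory Submission
  imports Defs
begin

text \<open>Write e(A, B) for the number of ordered pairs (a, b) \<in> A \<times> B counted with edge
  multiplicity. Fullness of S means e(S, S) = c (|S| - 1), so the degree bound c gives
  e(S, V - S) \<le> c, with equality only if every vertex of S has degree c; this is the degree of
  the new vertex in both shrinkings.
  An odd set of H_S through the new vertex comes from an even R \<subseteq> V - S, and R \<union> S is
  odd in H; an odd set of H_(V - S) through the new vertex comes from an even R \<subseteq> S, and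
  S - R is odd in H. In both cases the Gamma bound on that odd set of H, combined with
  the fullness of S, bounds t of the shrunk set by c.\<close>

definition cross_sum :: "('a \<Rightarrow> 'a \<Rightarrow> nat) \<Rightarrow> 'a set \<Rightarrow> 'a set \<Rightarrow> nat" where
  "cross_sum m A B = (\<Sum>u\<in>A. \<Sum>v\<in>B. m u v)"

lemma cross_sum_Un_left:
  "finite A \<Longrightarrow> finite B \<Longrightarrow> A \<inter> B = {} \<Longrightarrow>
    cross_sum m (A \<union> B) C = cross_sum m A C + cross_sum m B C"
  by (simp add: cross_sum_def sum.union_disjoint)

lemma cross_sum_Un_right:
  "finite B \<Longrightarrow> finite C \<Longrightarrow> B \<inter> C = {} \<Longrightarrow>
    cross_sum m A (B \<union> C) = cross_sum m A B + cross_sum m A C"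
  by (simp add: cross_sum_def sum.union_disjoint sum.distrib)

lemma cross_sum_commute: "(\<And>u v. m u v = m v u) \<Longrightarrow> cross_sum m A B = cross_sum m B A"
  unfolding cross_sum_def by (subst sum.swap) simp

lemma cross_sum_Un_self:
  assumes "finite A" "finite B" "A \<inter> B = {}" "\<And>u v. m u v = m v u"
  shows "cross_sum m (A \<union> B) (A \<union> B) = cross_sum m A A + 2 * cross_sum m A B + cross_sum m B B"
  using assms cross_sum_commute[of m B A] by (simp add: cross_sum_Un_left cross_sum_Un_right)

lemma even_cross_sum_self:
  assumes "finite R" "\<And>u v. m u v = m v u" "\<And>u. m u u = 0"
  shows "even (cross_sum m R R)"
  using assms(1)
proof (induction R rule: finite_induct)
  case empty
  then show ?case by (simp add: cross_sum_def)
next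
  case (insert a R)
  have "cross_sum m (insert a R) (insert a R) = 2 * (\<Sum>v\<in>R. m a v) + cross_sum m R R"
    using insert.hyps assms(2,3) by (simp add: cross_sum_def sum.distrib)
  then show ?case using insert.IH by simp
qed

lemma sum_deg_eq_cross_sum: "(\<Sum>v\<in>A. deg V m v) = cross_sum m A V"
  by (simp add: deg_def cross_sum_def)

lemma tval_le_of_cross_sum_le:
  assumes "2 \<le> card R" "cross_sum m R R \<le> c * (card R - 1)"
  shows "tval m R \<le> real c"
proof -
  have "2 * edges_in m R \<le> c * (card R - 1)"
    using assms(2) by (simp add: edges_in_def cross_sum_def)
  moreover have "real (c * (card R - 1)) = real c * (real (card R) - 1)"
    using assms(1) by (simp add: of_nat_diff)
  ultimately have "2 * real (edges_in m R) \<le> real c * (real (card R) - 1)"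
    by (metis of_nat_le_iff of_nat_mult of_nat_numeral)
  then show ?thesis
    using assms(1) unfolding tval_def by (simp add: divide_le_eq)
qed

lemma cross_sum_le_of_tval_le:
  assumes "2 \<le> card R" "even (cross_sum m R R)" "tval m R \<le> real c"
  shows "cross_sum m R R \<le> c * (card R - 1)"
proof -
  have "2 * real (edges_in m R) \<le> real c * (real (card R) - 1)"
    using assms(1,3) unfolding tval_def by (simp add: divide_le_eq)
  moreover have "real (c * (card R - 1)) = real c * (real (card R) - 1)"
    using assms(1) by (simp add: of_nat_diff)
  ultimately have "2 * edges_in m R \<le> c * (card R - 1)"
    by (metis of_nat_le_iff of_nat_mult of_nat_numeral)
  moreover have "2 * edges_in m R = cross_sum m R R"
    using assms(2) by (simp add: edges_in_def cross_sum_def)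
  ultimately show ?thesis by simp
qed

lemma cross_sum_ge_of_tval_eq:
  assumes "2 \<le> card R" "tval m R = real c"
  shows "c * (card R - 1) \<le> cross_sum m R R"
proof -
  have "2 * real (edges_in m R) = real c * (real (card R) - 1)"
    using assms unfolding tval_def by (simp add: divide_eq_eq)
  moreover have "real (c * (card R - 1)) = real c * (real (card R) - 1)"
    using assms(1) by (simp add: of_nat_diff)
  ultimately have "2 * edges_in m R = c * (card R - 1)"
    by (metis of_nat_eq_iff of_nat_mult of_nat_numeral)
  moreover have "2 * edges_in m R \<le> cross_sum m R R"
    by (simp add: edges_in_def cross_sum_def)
  ultimately show ?thesis by simp
qed

lemma finite_tval_odd_subsets:
  "finite V \<Longrightarrow> finite {tval m R | R. R \<subseteq> V \<and> odd (card R) \<and> 3 \<le> card R}"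
  by (rule finite_subset[of _ "tval m ` Pow V"]) auto

lemma tval_le_Gamma:
  "finite V \<Longrightarrow> R \<subseteq> V \<Longrightarrow> odd (card R) \<Longrightarrow> 3 \<le> card R \<Longrightarrow> tval m R \<le> Gamma V m"
  unfolding Gamma_def by (rule Max_ge) (auto simp: finite_tval_odd_subsets)

lemma Gamma_le:
  "finite V \<Longrightarrow> 0 \<le> c \<Longrightarrow> (\<And>R. R \<subseteq> V \<Longrightarrow> odd (card R) \<Longrightarrow> 3 \<le> card R \<Longrightarrow> tval m R \<le> c)
    \<Longrightarrow> Gamma V m \<le> c"
  unfolding Gamma_def by (subst Max_le_iff) (auto simp: finite_tval_odd_subsets)

lemma deg_le_maxdeg: "finite V \<Longrightarrow> v \<in> V \<Longrightarrow> deg V m v \<le> maxdeg V m"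
  unfolding maxdeg_def by (rule Max_ge) auto

lemma maxdeg_le:
  "finite V \<Longrightarrow> V \<noteq> {} \<Longrightarrow> (\<And>v. v \<in> V \<Longrightarrow> deg V m v \<le> c) \<Longrightarrow> maxdeg V m \<le> c"
  unfolding maxdeg_def by (subst Max_le_iff) auto

lemma phi_le_iff: "phi V m \<le> int c \<longleftrightarrow> maxdeg V m \<le> c \<and> Gamma V m \<le> real c"
  unfolding phi_def by (simp add: ceiling_le_iff)

lemma shrink_V_eq: "shrink_V V T = insert None (Some ` (V - T))"
  by (auto simp: shrink_V_def)

lemma card_shrink_V: "finite V \<Longrightarrow> card (shrink_V V T) = card (V - T) + 1"
  unfolding shrink_V_eq by (simp add: card_image image_iff)

lemma cross_sum_shrink_Some:
  assumes "R \<subseteq> V - T"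
  shows "cross_sum (shrink_m V m T) (Some ` R) (Some ` R) = cross_sum m R R"
proof -
  have "cross_sum (shrink_m V m T) (Some ` R) (Some ` R)
      = (\<Sum>u\<in>R. \<Sum>v\<in>R. shrink_m V m T (Some u) (Some v))"
    by (simp add: cross_sum_def sum.reindex)
  also have "\<dots> = cross_sum m R R"
    unfolding cross_sum_def using assms by (intro sum.cong refl) auto
  finally show ?thesis .
qed

lemma cross_sum_shrink_insert_None:
  assumes "R \<subseteq> V - T" "finite R"
  shows "cross_sum (shrink_m V m T) (insert None (Some ` R)) (insert None (Some ` R))
    = cross_sum m R R + 2 * cross_sum m R T"
proof -
  let ?m = "shrink_m V m T"
  have to_None: "(\<Sum>x\<in>Some ` R. ?m x None) = cross_sum m R T"
    using assms(1) by (auto simp: cross_sum_def sum.reindex subset_iff intro: sum.cong)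
  have from_None: "(\<Sum>x\<in>Some ` R. ?m None x) = cross_sum m R T"
    using assms(1) by (auto simp: cross_sum_def sum.reindex subset_iff intro: sum.cong)
  have "cross_sum ?m (insert None (Some ` R)) (insert None (Some ` R))
      = (\<Sum>x\<in>Some ` R. ?m None x) + (\<Sum>x\<in>Some ` R. ?m x None) + cross_sum ?m (Some ` R) (Some ` R)"
    using assms(2) by (simp add: cross_sum_def sum.distrib image_iff)
  then show ?thesis
    using to_None from_None cross_sum_shrink_Some[OF assms(1)] by simp
qed

lemma deg_shrink_Some:
  assumes "T \<subseteq> V" "finite V" "v \<in> V - T"
  shows "deg (shrink_V V T) (shrink_m V m T) (Some v) = deg V m v"
proof -
  let ?m = "shrink_m V m T"
  have "deg (shrink_V V T) ?m (Some v) = ?m (Some v) None + (\<Sum>u\<in>V - T. ?m (Some v) (Some u))"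
    unfolding deg_def shrink_V_eq using assms(2) by (simp add: image_iff sum.reindex)
  also have "\<dots> = (\<Sum>u\<in>T. m v u) + (\<Sum>u\<in>V - T. m v u)"
    using assms(3) by (auto intro: sum.cong)
  also have "\<dots> = deg V m v"
    unfolding deg_def using assms(1,2) by (simp add: sum.subset_diff[of T V])
  finally show ?thesis .
qed

lemma deg_shrink_None:
  assumes "finite V"
  shows "deg (shrink_V V T) (shrink_m V m T) None = cross_sum m (V - T) T"
  unfolding deg_def shrink_V_eq cross_sum_def using assms
  by (auto simp: image_iff sum.reindex intro: sum.cong)

lemma num_deg_shrink:
  assumes "T \<subseteq> V" "finite V"
  shows "num_deg (shrink_V V T) (shrink_m V m T) k
    = card {v \<in> V - T. deg V m v = k} + (if cross_sum m (V - T) T = k then 1 else 0)"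
proof -
  let ?A = "{v \<in> V - T. deg V m v = k}"
  have "{x \<in> shrink_V V T. deg (shrink_V V T) (shrink_m V m T) x = k}
     = (if cross_sum m (V - T) T = k then {None} else {}) \<union> Some ` ?A"
    using deg_shrink_None[OF assms(2)] deg_shrink_Some[OF assms]
    by (auto simp: shrink_V_eq)
  moreover have "finite ?A" using assms(2) by simp
  ultimately show ?thesis
    unfolding num_deg_def by (simp add: card_image image_iff)
qed

lemma maxdeg_shrink_le:
  assumes "T \<subseteq> V" "finite V" "\<And>v. v \<in> V \<Longrightarrow> deg V m v \<le> c" "cross_sum m (V - T) T \<le> c"
  shows "maxdeg (shrink_V V T) (shrink_m V m T) \<le> c"
  using assms deg_shrink_None[OF assms(2)] deg_shrink_Some[OF assms(1,2)]
  by (intro maxdeg_le) (auto simp: shrink_V_eq)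

lemma Gamma_shrink_le:
  assumes "T \<subseteq> V" "finite V"
    and odd: "\<And>R. R \<subseteq> V - T \<Longrightarrow> odd (card R) \<Longrightarrow> 3 \<le> card R \<Longrightarrow>
      cross_sum m R R \<le> c * (card R - 1)"
    and even: "\<And>R. R \<subseteq> V - T \<Longrightarrow> even (card R) \<Longrightarrow>
      cross_sum m R R + 2 * cross_sum m R T \<le> c * card R"
  shows "Gamma (shrink_V V T) (shrink_m V m T) \<le> real c"
proof (rule Gamma_le)
  show "finite (shrink_V V T)" using assms(2) by (simp add: shrink_V_eq)
  fix R assume R: "R \<subseteq> shrink_V V T" "odd (card R)" "3 \<le> card R"
  define R' where "R' = Some -` R"
  have R'_sub: "R' \<subseteq> V - T" using R(1) unfolding R'_def shrink_V_eq by auto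
  then have "finite R'" using assms(2) finite_subset by blast
  show "tval (shrink_m V m T) R \<le> real c"
  proof (cases "None \<in> R")
    case True
    then have R_eq: "R = insert None (Some ` R')" using R(1) unfolding R'_def shrink_V_eq by auto
    then have "card R = card R' + 1" using \<open>finite R'\<close> by (simp add: card_image image_iff)
    then show ?thesis
      using R R_eq even[OF R'_sub] cross_sum_shrink_insert_None[OF R'_sub \<open>finite R'\<close>]
      by (intro tval_le_of_cross_sum_le) auto
  next
    case False
    then have R_eq: "R = Some ` R'" using R(1) unfolding R'_def shrink_V_eq by auto
    then have "card R = card R'" by (simp add: card_image)
    then show ?thesis
      using R R_eq odd[OF R'_sub] cross_sum_shrink_Some[OF R'_sub]
      by (intro tval_le_of_cross_sum_le) auto
  qed
qed simp

locale phi_bounded =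
  fixes V :: "'a set" and m :: "'a \<Rightarrow> 'a \<Rightarrow> nat" and c :: nat
  assumes multigraph: "multigraph V m"
    and phi_le: "phi V m \<le> int c"
begin

lemma finite_V: "finite V"
  and m_sym: "m u v = m v u"
  and m_loopless: "m u u = 0"
  using multigraph by (auto simp: multigraph_def)

lemma maxdeg_le_c: "maxdeg V m \<le> c"
  and Gamma_le_c: "Gamma V m \<le> real c"
  using phi_le by (simp_all add: phi_le_iff)

lemma deg_le: "v \<in> V \<Longrightarrow> deg V m v \<le> c"
  using deg_le_maxdeg[OF finite_V] maxdeg_le_c order_trans by blast

lemma cross_sum_le_card: "R \<subseteq> V \<Longrightarrow> cross_sum m R V \<le> c * card R"
  using sum_mono[of R "deg V m" "\<lambda>_. c"] deg_le by (auto simp: sum_deg_eq_cross_sum mult.commute)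

lemma cross_sum_odd_le:
  assumes "R \<subseteq> V" "odd (card R)"
  shows "cross_sum m R R \<le> c * (card R - 1)"
proof (cases "card R = 1")
  case True
  then show ?thesis by (auto simp: card_1_singleton_iff cross_sum_def m_loopless)
next
  case False
  with assms(2) have "3 \<le> card R" by presburger
  moreover have "finite R" using assms(1) finite_V finite_subset by blast
  moreover have "tval m R \<le> real c"
    using tval_le_Gamma[OF finite_V assms \<open>3 \<le> card R\<close>, of m] Gamma_le_c by linarith
  ultimately show ?thesis
    by (intro cross_sum_le_of_tval_le even_cross_sum_self m_sym m_loopless) auto
qed

end

locale full_set = phi_bounded +
  fixes S :: "'a set"
  assumes S_subset: "S \<subseteq> V"
    and odd_card_S: "odd (card S)"
    and card_S_ge: "3 \<le> card S"
    and full: "tval m S = real c"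
begin

lemma finite_S: "finite S"
  using S_subset finite_V finite_subset by blast

lemma cross_sum_S_ge: "c * (card S - 1) \<le> cross_sum m S S"
  using cross_sum_ge_of_tval_eq[OF _ full] card_S_ge by simp

lemma cross_sum_S_V: "cross_sum m S V = cross_sum m S S + cross_sum m S (V - S)"
proof -
  have "V = S \<union> (V - S)" using S_subset by auto
  then show ?thesis
    using cross_sum_Un_right[OF finite_S, of "V - S" m S] finite_V by auto
qed

lemma boundary_le: "cross_sum m S (V - S) \<le> c"
proof -
  have "c * card S = c * (card S - 1) + c" using card_S_ge by (cases "card S") auto
  then show ?thesis
    using cross_sum_S_V cross_sum_S_ge cross_sum_le_card[OF S_subset] by linarith
qed

lemma deg_eq_if_boundary_eq:
  assumes "cross_sum m S (V - S) = c" "v \<in> S"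
  shows "deg V m v = c"
proof (rule ccontr)
  assume "deg V m v \<noteq> c"
  then have "deg V m v < c" using deg_le assms(2) S_subset by force
  then have "(\<Sum>u\<in>S. deg V m u) < (\<Sum>u\<in>S. c)"
    using deg_le S_subset finite_S assms(2) by (intro sum_strict_mono_ex1) auto
  moreover have "c * card S = c * (card S - 1) + c" using card_S_ge by (cases "card S") auto
  ultimately show False
    using cross_sum_S_V cross_sum_S_ge assms(1) by (simp add: sum_deg_eq_cross_sum mult.commute)
qed

lemma even_outside_S:
  assumes "R \<subseteq> V - S" "even (card R)"
  shows "cross_sum m R R + 2 * cross_sum m R S \<le> c * card R"
proof -
  have "finite R" using assms(1) finite_V finite_subset by blast
  have disj: "R \<inter> S = {}" using assms(1) by auto
  have card_Un: "card (R \<union> S) = card R + (card S - 1) + 1"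
    using card_Un_disjoint[OF \<open>finite R\<close> finite_S disj] card_S_ge by simp
  then have "cross_sum m (R \<union> S) (R \<union> S) \<le> c * (card R + (card S - 1))"
    using cross_sum_odd_le[of "R \<union> S"] assms S_subset odd_card_S by auto
  then show ?thesis
    using cross_sum_Un_self[OF \<open>finite R\<close> finite_S disj m_sym] cross_sum_S_ge
    by (simp add: add_mult_distrib2)
qed

lemma even_inside_S:
  assumes "R \<subseteq> S" "even (card R)"
  shows "cross_sum m R R + 2 * cross_sum m R (V - S) \<le> c * card R"
proof -
  define Q where "Q = S - R"
  have "finite R" using assms(1) finite_S finite_subset by blast
  have "finite Q" using finite_S by (simp add: Q_def)
  have card_S: "card S = card R + card Q"
    using card_Diff_subset[OF \<open>finite R\<close> assms(1)] card_mono[OF finite_S assms(1)]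
    by (simp add: Q_def)
  then have "odd (card Q)" using assms(2) odd_card_S by simp
  then have Q_le: "cross_sum m Q Q \<le> c * (card Q - 1)"
    using cross_sum_odd_le[of Q] S_subset by (auto simp: Q_def)
  have S_eq: "S = R \<union> Q" and "R \<inter> Q = {}" using assms(1) by (auto simp: Q_def)
  then have S_split: "cross_sum m S S = cross_sum m R R + 2 * cross_sum m R Q + cross_sum m Q Q"
    using cross_sum_Un_self[OF \<open>finite R\<close> \<open>finite Q\<close> _ m_sym] by simp
  have "V = R \<union> (Q \<union> (V - S))" using S_subset S_eq by auto
  then have "cross_sum m R V = cross_sum m R R + cross_sum m R (Q \<union> (V - S))"
    using cross_sum_Un_right[of R "Q \<union> (V - S)" m R] \<open>finite R\<close> \<open>finite Q\<close> finite_V assms(1)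
    by (auto simp: Q_def)
  also have "\<dots> = cross_sum m R R + (cross_sum m R Q + cross_sum m R (V - S))"
    using cross_sum_Un_right[of Q "V - S" m R] \<open>finite Q\<close> finite_V by (auto simp: Q_def)
  finally have "cross_sum m R V = cross_sum m R R + (cross_sum m R Q + cross_sum m R (V - S))" .
  moreover have "cross_sum m R V \<le> c * card R"
    using cross_sum_le_card assms(1) S_subset by auto
  moreover have "c * (card S - 1) = c * card R + c * (card Q - 1)"
    using card_S \<open>odd (card Q)\<close> by (cases "card Q") (auto simp: add_mult_distrib2)
  ultimately show ?thesis
    using cross_sum_S_ge S_split Q_le by linarith
qed

lemma boundary_commute: "cross_sum m (V - S) S = cross_sum m S (V - S)"
  by (rule cross_sum_commute) (rule m_sym)

lemma maxdeg_shrink: "maxdeg (shrink_V V S) (shrink_m V m S) \<le> c"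
  using maxdeg_shrink_le[OF S_subset finite_V deg_le] boundary_le boundary_commute by simp

lemma Gamma_shrink: "Gamma (shrink_V V S) (shrink_m V m S) \<le> real c"
  using cross_sum_odd_le even_outside_S by (intro Gamma_shrink_le[OF S_subset finite_V]) auto

lemma num_deg_shrink_le: "num_deg (shrink_V V S) (shrink_m V m S) c \<le> num_deg V m c"
proof -
  let ?A = "{v \<in> V - S. deg V m v = c}"
  have fin: "finite {v \<in> V. deg V m v = c}" using finite_V by simp
  have "card ?A + (if cross_sum m S (V - S) = c then 1 else 0) \<le> card {v \<in> V. deg V m v = c}"
  proof (cases "cross_sum m S (V - S) = c")
    case True
    then have "?A \<union> S \<subseteq> {v \<in> V. deg V m v = c}"
      using deg_eq_if_boundary_eq S_subset by auto
    moreover have "card (?A \<union> S) = card ?A + card S"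
      using finite_V finite_S by (intro card_Un_disjoint) auto
    ultimately have "card ?A + card S \<le> card {v \<in> V. deg V m v = c}"
      using card_mono[OF fin] by metis
    then show ?thesis using True card_S_ge by simp
  next
    case False
    have "?A \<subseteq> {v \<in> V. deg V m v = c}" by auto
    then show ?thesis using False card_mono[OF fin] by simp
  qed
  then show ?thesis
    using num_deg_shrink[OF S_subset finite_V] boundary_commute by (simp add: num_deg_def)
qed

lemma compl_compl: "V - (V - S) = S"
  using S_subset by auto

lemma maxdeg_shrink_compl: "maxdeg (shrink_V V (V - S)) (shrink_m V m (V - S)) \<le> c"
  using maxdeg_shrink_le[of "V - S" V m c] finite_V deg_le boundary_le by (simp add: compl_compl)

lemma Gamma_shrink_compl: "Gamma (shrink_V V (V - S)) (shrink_m V m (V - S)) \<le> real c"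
  using cross_sum_odd_le even_inside_S S_subset
  by (intro Gamma_shrink_le[of "V - S" V]) (auto simp: finite_V compl_compl)

lemma num_deg_shrink_compl_gt:
  assumes "num_deg (shrink_V V (V - S)) (shrink_m V m (V - S)) c > num_deg V m c"
  shows "card (shrink_V V (V - S)) = num_deg V m c + 1"
    and "\<forall>v \<in> shrink_V V (V - S). deg (shrink_V V (V - S)) (shrink_m V m (V - S)) v = c"
proof -
  let ?A = "{v \<in> S. deg V m v = c}"
  have count: "num_deg (shrink_V V (V - S)) (shrink_m V m (V - S)) c
      = card ?A + (if cross_sum m S (V - S) = c then 1 else 0)"
    using num_deg_shrink[of "V - S" V] finite_V by (simp add: compl_compl)
  have A_le: "card ?A \<le> num_deg V m c"
    unfolding num_deg_def using finite_V S_subset by (intro card_mono) auto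
  then have boundary: "cross_sum m S (V - S) = c"
    using assms count by (cases "cross_sum m S (V - S) = c") auto
  then have "?A = S" using deg_eq_if_boundary_eq by auto
  then have "num_deg V m c = card S" using assms count boundary A_le by simp
  then show "card (shrink_V V (V - S)) = num_deg V m c + 1"
    using card_shrink_V[OF finite_V] by (simp add: compl_compl)
  show "\<forall>x \<in> shrink_V V (V - S). deg (shrink_V V (V - S)) (shrink_m V m (V - S)) x = c"
  proof
    fix x assume "x \<in> shrink_V V (V - S)"
    then consider "x = None" | v where "x = Some v" "v \<in> S"
      by (auto simp: shrink_V_eq compl_compl)
    then show "deg (shrink_V V (V - S)) (shrink_m V m (V - S)) x = c"
    proof cases
      case 1
      then show ?thesis using deg_shrink_None[OF finite_V] boundary by (simp add: compl_compl)
    next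
      case (2 v)
      then show ?thesis
        using deg_shrink_Some[of "V - S" V v m] finite_V S_subset deg_eq_if_boundary_eq[OF boundary]
        by (simp add: compl_compl)
    qed
  qed
qed

end

theorem mainTheorem7:
  fixes V :: "'a set" and m :: "'a \<Rightarrow> 'a \<Rightarrow> nat" and d :: nat and S :: "'a set"
  assumes "multigraph V m"
    and "even (card V)"
    and "phi V m \<le> int d + 1"
    and "S \<subset> V" and "odd (card S)" and "3 \<le> card S"
    and "tval m S = real d + 1"
  shows "maxdeg (shrink_V V S) (shrink_m V m S) \<le> d + 1
    \<and> Gamma (shrink_V V S) (shrink_m V m S) \<le> real d + 1
    \<and> num_deg (shrink_V V S) (shrink_m V m S) (d + 1) \<le> num_deg V m (d + 1)
    \<and> maxdeg (shrink_V V (V - S)) (shrink_m V m (V - S)) \<le> d + 1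
    \<and> Gamma (shrink_V V (V - S)) (shrink_m V m (V - S)) \<le> real d + 1
    \<and> (num_deg (shrink_V V (V - S)) (shrink_m V m (V - S)) (d + 1) > num_deg V m (d + 1)
       \<longrightarrow> card (shrink_V V (V - S)) = num_deg V m (d + 1) + 1
         \<and> (\<forall>v \<in> shrink_V V (V - S). deg (shrink_V V (V - S)) (shrink_m V m (V - S)) v = d + 1))"
proof -
  interpret full_set V m "d + 1" S
    using assms by unfold_locales auto
  have "real (d + 1) = real d + 1" by simp
  then show ?thesis
    using maxdeg_shrink Gamma_shrink num_deg_shrink_le
      maxdeg_shrink_compl Gamma_shrink_compl num_deg_shrink_compl_gt
    by metis
qed

end
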